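(* Let $G\cong A_n$ with $n\ge 5$. Then either $G\cong A_5$ or $o(G)\ge 3.55$.
   Context: For a finite group $G$, $\psi(G)=\sum_{x\in G}|x|$ where $|x|$ is the order of $x$, and $o(G)=\psi(G)/|G|$. $A_n$ is the alternating group of degree $n$. *)

theory Defs
  imports "HOL-Algebra.Algebra"
begin

definition psi :: "('a, 'b) monoid_scheme \<Rightarrow> nat" where
  "psi G = (\<Sum>x\<in>carrier G. group.ord G x)"

definition avg_ord :: "('a, 'b) monoid_scheme \<Rightarrow> real" where
  "avg_ord G = real (psi G) / real (order G)"

end

theory Submission
  imports Defs
begin

text \<open>
  An even permutation p has order at least the length of its cycle through 1, and, if it fixes 1,
  at least the length of its cycle through 2. A permutation of S of parity b sending x to a \<noteq> x is
  (x a) \<circ> q with q a permutation of S - {x} of the opposite parity, and its cycle through x is one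
  longer than the cycle of q through a. This yields a recursion for the total length of the cycles
  through a point, summed over all permutations of given parity, whose solution is roughly
  (|S| + 1)/2 per permutation. Applied to 1 in {1..n} and to 2 in {2..n} it gives
  psi(A_n) \<ge> 3.55 |A_n| once n \<ge> 6.
\<close>

lemma least_power_fixpoint: "p x = x \<Longrightarrow> least_power p x = 1"
  using least_power_le[where f=p and n=1 and x=x] least_powerI(2)[where f=p and n=1 and x=x]
  by simp

lemma least_power_transpose_comp:
  assumes q: "permutation q" and qx: "q x = x" and ax: "a \<noteq> x"
  shows "least_power (transpose x a \<circ> q) x = Suc (least_power q a)"
proof -
  define p where "p = transpose x a \<circ> q"
  define L where "L = least_power q a"
  have L: "0 < L" "(q ^^ L) a = a" using least_power_of_permutation[OF q] by (simp_all add: L_def)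
  have q_orbit_avoids_x: "(q ^^ i) a \<noteq> x" for i
  proof
    assume "(q ^^ i) a = x"
    moreover have "(q ^^ i) x = x" by (induction i) (simp_all add: qx)
    ultimately have "(q ^^ i) a = (q ^^ i) x" by simp
    then show False
      using ax bij_is_inj[OF bij_fn[OF permutation_bijective[OF q], of i]] by (auto dest: injD)
  qed
  have p_follows_q: "(p ^^ i) a = (q ^^ i) a" if "i < L" for i
    using that
  proof (induction i)
    case (Suc i)
    have "(q ^^ Suc i) a \<noteq> a"
      using Suc.prems least_power_le[where f=q and n="Suc i" and x=a] by (auto simp: L_def)
    then show ?case
      using Suc q_orbit_avoids_x[of "Suc i"] by (simp add: p_def transpose_apply_other)
  qed simp
  have "(p ^^ L) a = x"
  proof -
    obtain L' where L': "L = Suc L'" using L(1) by (cases L) auto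
    show ?thesis using p_follows_q[of L'] L(2) by (simp add: L' p_def)
  qed
  moreover have p_x: "(p ^^ Suc i) x = (p ^^ i) a" for i
    by (simp add: funpow_Suc_right p_def qx del: funpow.simps)
  ultimately have "(p ^^ Suc L) x = x" by simp
  moreover have no_early_return: "(p ^^ Suc i) x \<noteq> x" if "i < L" for i
    using that p_x p_follows_q q_orbit_avoids_x by simp
  ultimately have "least_power p x = Suc L"
    unfolding least_power_def
  proof (intro Least_equality conjI)
    fix y assume y: "(p ^^ y) x = x \<and> 0 < y"
    then obtain i where "y = Suc i" by (cases y) auto
    then show "Suc L \<le> y" using y no_early_return[of i] by (cases "i < L") auto
  qed simp_all
  then show ?thesis by (simp add: p_def L_def)
qed

definition parity_perms :: "'a set \<Rightarrow> bool \<Rightarrow> ('a \<Rightarrow> 'a) set" where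
  "parity_perms S b = {p. p permutes S \<and> evenperm p = b}"

lemma finite_parity_perms: "finite S \<Longrightarrow> finite (parity_perms S b)"
  unfolding parity_perms_def by (rule finite_subset[OF _ finite_permutations]) auto

lemma permutes_remove_iff:
  assumes "x \<in> S"
  shows "p permutes (S - {x}) \<longleftrightarrow> p permutes S \<and> p x = x"
  using assms permutes_subset[of p "S - {x}" S] permutes_superset[of p S "S - {x}"]
  by (auto simp: permutes_not_in)

lemma parity_perms_fixing:
  assumes "x \<in> S"
  shows "{p \<in> parity_perms S b. p x = x} = parity_perms (S - {x}) b"
  using permutes_remove_iff[OF assms] by (auto simp: parity_perms_def)

lemma transpose_comp_parity_perms:
  assumes "finite S" "a \<in> S" "c \<in> S" "a \<noteq> c" "q \<in> parity_perms S b"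
  shows "transpose a c \<circ> q \<in> parity_perms S (\<not> b)"
proof -
  have q: "q permutes S" "evenperm q = b" using assms(5) by (simp_all add: parity_perms_def)
  have "evenperm (transpose a c \<circ> q) \<longleftrightarrow> \<not> evenperm q"
    using evenperm_comp[OF permutation_swap_id permutes_imp_permutation[OF assms(1) q(1)]]
      evenperm_swap[of a c] assms(4) by simp
  then show ?thesis
    using q permutes_compose[OF q(1) permutes_swap_id[OF assms(2,3)]] by (simp add: parity_perms_def)
qed

lemma card_parity_perms:
  assumes "finite S" "card S \<ge> 2"
  shows "2 * card (parity_perms S b) = fact (card S)"
proof -
  have "\<not> card S \<le> Suc 0" using assms(2) by simp
  then obtain a c where ac: "a \<in> S" "c \<in> S" "a \<noteq> c"
    using card_le_Suc0_iff_eq[OF assms(1)] by blast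
  have flip: "bij_betw (\<lambda>q. transpose a c \<circ> q) (parity_perms S b) (parity_perms S (\<not> b))" for b
    using transpose_comp_parity_perms[OF assms(1) ac]
      transpose_comp_parity_perms[OF assms(1) ac, of _ "\<not> b"]
    by (intro bij_betw_byWitness[where f' = "\<lambda>q. transpose a c \<circ> q"]) (auto simp: o_assoc)
  have "{p. p permutes S} = parity_perms S b \<union> parity_perms S (\<not> b)"
    by (auto simp: parity_perms_def)
  then have "fact (card S) = card (parity_perms S b \<union> parity_perms S (\<not> b))"
    using card_permutations[OF refl assms(1)] by simp
  also have "\<dots> = card (parity_perms S b) + card (parity_perms S (\<not> b))"
    using finite_parity_perms[OF assms(1)] by (intro card_Un_disjoint) (auto simp: parity_perms_def)
  finally show ?thesis using bij_betw_same_card[OF flip[of b]] by simp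
qed

lemma parity_perms_moving:
  assumes "finite S" "x \<in> S" "a \<in> S - {x}"
  shows "{p \<in> parity_perms S b. p x = a} = (\<lambda>q. transpose x a \<circ> q) ` parity_perms (S - {x}) (\<not> b)"
proof (intro equalityI subsetI)
  fix p assume p: "p \<in> {p \<in> parity_perms S b. p x = a}"
  define q where "q = transpose x a \<circ> p"
  have "q \<in> parity_perms S (\<not> b)"
    unfolding q_def using assms p by (intro transpose_comp_parity_perms) auto
  moreover have "q x = x" using p by (simp add: q_def)
  ultimately have "q \<in> parity_perms (S - {x}) (\<not> b)"
    using parity_perms_fixing[OF assms(2)] by blast
  moreover have "p = transpose x a \<circ> q" by (simp add: q_def o_assoc)
  ultimately show "p \<in> (\<lambda>q. transpose x a \<circ> q) ` parity_perms (S - {x}) (\<not> b)" by blast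
next
  fix p assume "p \<in> (\<lambda>q. transpose x a \<circ> q) ` parity_perms (S - {x}) (\<not> b)"
  then obtain q where p: "p = transpose x a \<circ> q" and q: "q \<in> parity_perms (S - {x}) (\<not> b)" by blast
  have "q \<in> parity_perms S (\<not> b)" "q x = x"
    using q parity_perms_fixing[OF assms(2), of "\<not> b"] by blast+
  then show "p \<in> {p \<in> parity_perms S b. p x = a}"
    using transpose_comp_parity_perms[of S x a q "\<not> b"] assms by (auto simp: p)
qed

lemma inj_on_transpose_comp: "inj_on (\<lambda>q. transpose a c \<circ> q) A"
proof (rule inj_onI)
  fix q r assume "transpose a c \<circ> q = transpose a c \<circ> r"
  then have "transpose a c \<circ> (transpose a c \<circ> q) = transpose a c \<circ> (transpose a c \<circ> r)"
    by simp
  then show "q = r" by (simp add: o_assoc)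
qed

lemma sum_parity_perms_split:
  assumes "finite S" "x \<in> S"
  shows "(\<Sum>p\<in>parity_perms S b. f p) = (\<Sum>p\<in>parity_perms (S - {x}) b. f p)
     + (\<Sum>a\<in>S - {x}. \<Sum>q\<in>parity_perms (S - {x}) (\<not> b). f (transpose x a \<circ> q))"
proof -
  let ?moving = "{p \<in> parity_perms S b. p x \<noteq> x}"
  have fin: "finite (parity_perms S b)" using finite_parity_perms[OF assms(1)] .
  have "(\<Sum>p\<in>parity_perms S b. f p) = (\<Sum>p\<in>{p \<in> parity_perms S b. p x = x}. f p) + sum f ?moving"
    using fin by (intro sum.union_disjoint[THEN trans[rotated]] arg_cong[where f="sum f"]) auto
  also have "(\<Sum>p\<in>{p \<in> parity_perms S b. p x = x}. f p) = (\<Sum>p\<in>parity_perms (S - {x}) b. f p)"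
    using parity_perms_fixing[OF assms(2)] by simp
  also have "sum f ?moving = (\<Sum>a\<in>S - {x}. \<Sum>p\<in>{p \<in> ?moving. p x = a}. f p)"
    using fin assms
    by (intro sum.group[symmetric] finite_subset[OF _ fin]) (auto simp: parity_perms_def permutes_in_image)
  also have "\<dots> = (\<Sum>a\<in>S - {x}. \<Sum>q\<in>parity_perms (S - {x}) (\<not> b). f (transpose x a \<circ> q))"
  proof (rule sum.cong[OF refl])
    fix a assume a: "a \<in> S - {x}"
    have "{p \<in> ?moving. p x = a} = {p \<in> parity_perms S b. p x = a}" using a by auto
    also have "\<dots> = (\<lambda>q. transpose x a \<circ> q) ` parity_perms (S - {x}) (\<not> b)"
      by (rule parity_perms_moving[OF assms a])
    finally have moving_to_a:
      "{p \<in> ?moving. p x = a} = (\<lambda>q. transpose x a \<circ> q) ` parity_perms (S - {x}) (\<not> b)" .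
    then show "(\<Sum>p\<in>{p \<in> ?moving. p x = a}. f p)
        = (\<Sum>q\<in>parity_perms (S - {x}) (\<not> b). f (transpose x a \<circ> q))"
      unfolding moving_to_a by (simp add: sum.reindex inj_on_transpose_comp)
  qed
  finally show ?thesis .
qed

definition cycle_length_sum :: "'a set \<Rightarrow> 'a \<Rightarrow> bool \<Rightarrow> nat" where
  "cycle_length_sum S x b = (\<Sum>p\<in>parity_perms S b. least_power p x)"

definition moved_cycle_length_sum :: "'a set \<Rightarrow> 'a \<Rightarrow> bool \<Rightarrow> nat" where
  "moved_cycle_length_sum S x b = (\<Sum>p\<in>parity_perms S b. if p x = x then 0 else least_power p x)"

lemma moved_cycle_length_sum_rec:
  assumes "finite S" "x \<in> S"
  shows "moved_cycle_length_sum S x b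
    = (\<Sum>a\<in>S - {x}. card (parity_perms (S - {x}) (\<not> b)) + cycle_length_sum (S - {x}) a (\<not> b))"
proof -
  have fixes_x: "q x = x" if "q \<in> parity_perms (S - {x}) c" for q c
    using that by (auto simp: parity_perms_def permutes_not_in)
  have cycle_through_x: "least_power (transpose x a \<circ> q) x = 1 + least_power q a"
    if "a \<in> S - {x}" "q \<in> parity_perms (S - {x}) (\<not> b)" for a q
  proof -
    have "permutation q"
      using that(2) assms(1) permutes_imp_permutation[of "S - {x}" q] by (simp add: parity_perms_def)
    then show ?thesis using that fixes_x[OF that(2)] by (simp add: least_power_transpose_comp)
  qed
  have "moved_cycle_length_sum S x b
      = (\<Sum>a\<in>S - {x}. \<Sum>q\<in>parity_perms (S - {x}) (\<not> b). least_power (transpose x a \<circ> q) x)"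
    unfolding moved_cycle_length_sum_def sum_parity_perms_split[OF assms]
    by (auto intro!: sum.neutral sum.cong simp: fixes_x)
  also have "\<dots> = (\<Sum>a\<in>S - {x}. \<Sum>q\<in>parity_perms (S - {x}) (\<not> b). 1 + least_power q a)"
    using cycle_through_x by (intro sum.cong refl)
  finally show ?thesis unfolding cycle_length_sum_def sum.distrib by simp
qed

lemma cycle_length_sum_eq_moved:
  assumes "finite S" "x \<in> S"
  shows "cycle_length_sum S x b = card (parity_perms (S - {x}) b) + moved_cycle_length_sum S x b"
proof -
  have "cycle_length_sum S x b
      = (\<Sum>p\<in>parity_perms S b. (if p x = x then 1 else 0) + (if p x = x then 0 else least_power p x))"
    unfolding cycle_length_sum_def by (intro sum.cong) (simp_all add: least_power_fixpoint)
  also have "\<dots> = card {p \<in> parity_perms S b. p x = x} + moved_cycle_length_sum S x b"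
    unfolding moved_cycle_length_sum_def sum.distrib
    by (simp add: sum.inter_filter[OF finite_parity_perms[OF assms(1)], symmetric])
  finally show ?thesis using parity_perms_fixing[OF assms(2)] by simp
qed

lemma moved_cycle_length_sum_lower_bound_step:
  assumes "finite S" "x \<in> S" "card S = Suc k" "2 \<le> k"
    and cycle_bound: "\<And>a. a \<in> S - {x} \<Longrightarrow>
      fact k * (k + 1) \<le> 4 * cycle_length_sum (S - {x}) a (\<not> b) + 2 * fact (k - 1)"
  shows "k * (k + 3) * fact k \<le> 4 * moved_cycle_length_sum S x b + 2 * fact k"
proof -
  let ?N = "card (parity_perms (S - {x}) (\<not> b))"
  have S': "finite (S - {x})" "card (S - {x}) = k" using assms by auto
  have N: "4 * ?N = 2 * fact k" using card_parity_perms[OF S'(1)] S'(2) assms(4) by simp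
  have "k * (4 * ?N + fact k * (k + 1))
      \<le> (\<Sum>a\<in>S - {x}. 4 * ?N + 4 * cycle_length_sum (S - {x}) a (\<not> b) + 2 * fact (k - 1))"
    using sum_bounded_below[of "S - {x}" "4 * ?N + fact k * (k + 1)"] cycle_bound S'(2) by force
  also have "\<dots> = 4 * moved_cycle_length_sum S x b + k * (2 * fact (k - 1))"
    by (simp add: moved_cycle_length_sum_rec[OF assms(1,2)] sum.distrib sum_distrib_left S'(2))
  also have "k * (2 * fact (k - 1)) = 2 * fact k"
    using assms(4) by (cases k) auto
  finally show ?thesis unfolding N by (simp add: algebra_simps)
qed

lemma cycle_length_sum_lower_bound:
  assumes "finite S" "x \<in> S"
  shows "fact (card S) * (card S + 1) \<le> 4 * cycle_length_sum S x b + 2 * fact (card S - 1)"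
  using assms
proof (induction "card S" arbitrary: S x b rule: less_induct)
  case less
  obtain k where k: "card S = Suc k" using less.prems by (cases "card S") auto
  consider "k = 0" | "k = 1" | "2 \<le> k" by linarith
  then show ?case
  proof cases
    case 1
    then show ?thesis using k by simp
  next
    case 2
    have "0 < least_power p x" if "p \<in> parity_perms S b" for p
      using that least_power_of_permutation(2)[OF permutes_imp_permutation[OF less.prems(1)]]
      by (simp add: parity_perms_def)
    then have "card (parity_perms S b) \<le> cycle_length_sum S x b"
      unfolding cycle_length_sum_def card_eq_sum by (intro sum_mono) (simp add: Suc_le_eq)
    moreover have "card (parity_perms S b) = 1"
      using card_parity_perms[OF less.prems(1), of b] k 2 by simp
    ultimately show ?thesis using k 2 by simp
  next
    case 3
    have "k * (k + 3) * fact k \<le> 4 * moved_cycle_length_sum S x b + 2 * fact k"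
    proof (rule moved_cycle_length_sum_lower_bound_step[OF less.prems k 3])
      fix a assume a: "a \<in> S - {x}"
      have "card (S - {x}) = k" using k less.prems by simp
      then show "fact k * (k + 1) \<le> 4 * cycle_length_sum (S - {x}) a (\<not> b) + 2 * fact (k - 1)"
        using less.hyps[of "S - {x}" a "\<not> b"] less.prems a k by simp
    qed
    moreover have "4 * card (parity_perms (S - {x}) b) = 2 * fact k"
      using card_parity_perms[of "S - {x}" b] less.prems k 3 by simp
    moreover have "fact (card S) * (card S + 1) = k * (k + 3) * fact k + 2 * fact k"
      using k by (simp add: algebra_simps)
    ultimately show ?thesis
      using cycle_length_sum_eq_moved[OF less.prems, of b] k by simp
  qed
qed

lemma moved_cycle_length_sum_lower_bound:
  assumes "finite S" "x \<in> S" "card S = Suc k" "2 \<le> k"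
  shows "k * (k + 3) * fact k \<le> 4 * moved_cycle_length_sum S x b + 2 * fact k"
  using assms cycle_length_sum_lower_bound[of "S - {x}"]
  by (intro moved_cycle_length_sum_lower_bound_step) auto

lemma alt_group_nat_pow:
  assumes "p \<in> carrier (alt_group n)"
  shows "p [^]\<^bsub>alt_group n\<^esub> (k::nat) = p ^^ k"
proof (induction k)
  case (Suc k)
  then show ?case by (simp add: alt_group_mult funpow_Suc_right del: funpow.simps)
qed (simp add: alt_group_one)

lemma finite_carrier_alt_group: "finite (carrier (alt_group n))"
  by (rule finite_subset[OF _ finite_permutations[of "{1..n}"]]) (auto simp: alt_group_carrier)

lemma least_power_le_ord_alt_group:
  assumes "p \<in> carrier (alt_group n)"
  shows "least_power p x \<le> group.ord (alt_group n) p"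
proof -
  interpret A: group "alt_group n" by (rule alt_group_is_group)
  have "0 < A.ord p" using A.ord_ge_1[OF finite_carrier_alt_group assms] by simp
  moreover have "(p ^^ A.ord p) x = x"
    using A.pow_ord_eq_1[OF assms] alt_group_nat_pow[OF assms] by (simp add: alt_group_one)
  ultimately show ?thesis by (intro dvd_imp_le least_power_minimal)
qed

lemma moved_cycle_length_sums_le_psi_alt_group:
  assumes "1 \<le> n"
  shows "moved_cycle_length_sum {1..n} 1 True + moved_cycle_length_sum {2..n} 2 True \<le> psi (alt_group n)"
proof -
  let ?S = "{1..n::nat}"
  have carrier: "carrier (alt_group n) = parity_perms ?S True"
    by (auto simp: parity_perms_def alt_group_carrier)
  have S': "?S - {1} = {2..n}" by auto
  define h where "h p = (if p 1 = 1 then 0 else least_power p 1)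
    + (if p 1 = 1 then (if p 2 = 2 then 0 else least_power p 2) else 0)" for p :: "nat \<Rightarrow> nat"
  have "(\<Sum>p\<in>parity_perms ?S True. if p 1 = 1 then (if p 2 = 2 then 0 else least_power p 2) else 0)
      = (\<Sum>p\<in>{p \<in> parity_perms ?S True. p 1 = 1}. if p 2 = 2 then 0 else least_power p 2)"
    by (simp add: sum.inter_filter[OF finite_parity_perms])
  also have "\<dots> = moved_cycle_length_sum {2..n} 2 True"
    using parity_perms_fixing[of 1 ?S True] assms S' by (simp add: moved_cycle_length_sum_def)
  finally have fixing_1: "(\<Sum>p\<in>parity_perms ?S True.
      if p 1 = 1 then (if p 2 = 2 then 0 else least_power p 2) else 0) = moved_cycle_length_sum {2..n} 2 True" .
  have "moved_cycle_length_sum ?S 1 True + moved_cycle_length_sum {2..n} 2 True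
      = (\<Sum>p\<in>parity_perms ?S True. h p)"
    unfolding h_def sum.distrib fixing_1 moved_cycle_length_sum_def ..
  also have "\<dots> \<le> (\<Sum>p\<in>parity_perms ?S True. group.ord (alt_group n) p)"
    \<comment> \<open>at most one summand of h p is non-zero, and each is the length of a cycle of p\<close>
    using least_power_le_ord_alt_group[of _ n] unfolding carrier[symmetric] h_def
    by (intro sum_mono) (auto simp del: One_nat_def)
  finally show ?thesis unfolding psi_def carrier .
qed

lemma avg_ord_alt_group_ge:
  assumes "6 \<le> n"
  shows "3.55 \<le> avg_ord (alt_group n)"
proof -
  define j where "j = n - 2"
  have n: "n = j + 2" and j: "4 \<le> j" using assms by (simp_all add: j_def)
  define F :: nat where "F = fact j"
  define M1 where "M1 = moved_cycle_length_sum {1..n} 1 True"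
  define M2 where "M2 = moved_cycle_length_sum {2..n} 2 True"
  have "(j + 1) * (j + 4) * ((j + 1) * F) \<le> 4 * M1 + 2 * ((j + 1) * F)"
    using moved_cycle_length_sum_lower_bound[of "{1..n}" 1 "j + 1" True] n j
    by (simp add: M1_def F_def algebra_simps)
  moreover have "j * (j + 3) * F \<le> 4 * M2 + 2 * F"
    using moved_cycle_length_sum_lower_bound[of "{2..n}" 2 j] n j by (simp add: M2_def F_def)
  moreover have "355 * (j + 2) * (j + 1) + 100 * (j + 1) + 100 \<le> 50 * ((j + 1) * (j + 1) * (j + 4) + j * (j + 3))"
  proof -
    obtain i where "j = i + 4" using j by (metis add.commute le_add_diff_inverse)
    then show ?thesis by (simp add: algebra_simps)
  qed
  then have "(355 * (j + 2) * (j + 1) + 100 * (j + 1) + 100) * F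
      \<le> 50 * ((j + 1) * (j + 1) * (j + 4) + j * (j + 3)) * F"
    by (rule mult_right_mono) simp
  ultimately have "355 * ((j + 2) * ((j + 1) * F)) \<le> 200 * (M1 + M2)"
    unfolding add_mult_distrib add_mult_distrib2 mult.assoc by linarith
  also have "M1 + M2 \<le> psi (alt_group n)"
    unfolding M1_def M2_def using n by (intro moved_cycle_length_sums_le_psi_alt_group) simp
  finally have "355 * ((j + 2) * ((j + 1) * F)) \<le> 200 * psi (alt_group n)" by simp
  moreover have order: "2 * order (alt_group n) = (j + 2) * ((j + 1) * F)"
    unfolding order_def using alt_group_card_carrier[of n] n by (simp add: F_def)
  ultimately have "real (71 * order (alt_group n)) \<le> real (20 * psi (alt_group n))"
    unfolding of_nat_le_iff by linarith
  moreover have "0 < order (alt_group n)"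
    using monoid.order_gt_0_iff_finite[OF group.is_monoid[OF alt_group_is_group]] finite_carrier_alt_group by blast
  ultimately show ?thesis
    unfolding avg_ord_def by (simp add: field_simps)
qed

lemma ord_iso:
  assumes "group G" "group H" "f \<in> iso G H" "x \<in> carrier G"
  shows "group.ord H (f x) = group.ord G x"
proof -
  interpret G: group G by fact
  interpret H: group H by fact
  interpret f: group_hom G H f
    using assms(1-3) by (simp add: group_hom_def group_hom_axioms_def iso_imp_homomorphism)
  have "f (x [^]\<^bsub>G\<^esub> k) = \<one>\<^bsub>H\<^esub> \<longleftrightarrow> x [^]\<^bsub>G\<^esub> k = \<one>\<^bsub>G\<^esub>" for k :: nat
    using assms(3,4) f.hom_one by (metis G.nat_pow_closed G.one_closed iso_iff inj_on_eq_iff)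
  then have "f x [^]\<^bsub>H\<^esub> k = \<one>\<^bsub>H\<^esub> \<longleftrightarrow> G.ord x dvd k" for k :: nat
    using assms(4) G.pow_eq_id f.hom_nat_pow by simp
  then show ?thesis using H.ord_unique assms(4) by simp
qed

lemma avg_ord_iso:
  assumes "group G" "group H" "G \<cong> H"
  shows "avg_ord G = avg_ord H"
proof -
  obtain f where f: "f \<in> iso G H" using assms(3) unfolding is_iso_def by blast
  then have "bij_betw f (carrier G) (carrier H)" by (simp add: iso_def)
  then have "psi H = (\<Sum>x\<in>carrier G. group.ord H (f x))"
    unfolding psi_def by (rule sum.reindex_bij_betw[symmetric])
  also have "\<dots> = psi G"
    unfolding psi_def using ord_iso[OF assms(1,2) f] by simp
  finally show ?thesis
    unfolding avg_ord_def using iso_same_order[OF f] by simp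
qed

theorem lemma4p1:
  fixes G :: "('a, 'b) monoid_scheme" and n :: nat
  assumes "group G"
    and "G \<cong> alt_group n"
    and "n \<ge> 5"
  shows "G \<cong> alt_group 5 \<or> avg_ord G \<ge> 3.55"
proof (cases "n = 5")
  case True
  then show ?thesis using assms(2) by simp
next
  case False
  then have "3.55 \<le> avg_ord (alt_group n)"
    using assms(3) by (intro avg_ord_alt_group_ge) simp
  then show ?thesis
    using avg_ord_iso[OF assms(1) alt_group_is_group assms(2)] by simp
qed

end
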